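(* In the Neutralization-Based Reclamation (NBR) scheme described in the context, no reclaimer thread ever reclaims (frees) an unsafe node; that is, no node freed by a reclaimer is subsequently accessed by any thread.
   Context: Setting: an asynchronous shared-memory system with a fixed set of threads operating on a linked concurrent data structure whose nodes are reached from a fixed set of entry points; a node that has been unlinked is retired by exactly one thread, and a node is unsafe for reclamation if some thread may still access it. NBR works as follows. Each thread has a private limbo bag of retired nodes, a thread-local atomic boolean flag restartable, and a row of a shared single-writer multi-reader array reservations (at most $r$ slots per thread). Each data structure operation consists of an optional preamble (no access to shared nodes), then one or more read phases each followed by a write phase. Immediately before a read phase the thread sets a checkpoint (via sigsetjmp); at the beginning of a read phase it clears its reservations and then stores true into restartable (sequentially consistent store); during a read phase it only reads, and only shared nodes discovered within that phase starting from an entry point. To end a read phase and enter the write phase, the thread writes pointers to all shared nodes it will access in the write phase into its reservation slots and then stores false into restartable (sequentially consistent store); in the write phase it accesses only nodes it reserved before entering the write phase, and on receipt of a signal it simply continues. On receipt of a neutralizing signal a thread runs a handler: if restartable is false it returns and continues; otherwise it jumps back (siglongjmp) to its last checkpoint, discarding all private references obtained in the read phase, and restarts the read phase from an entry point. A thread retires an unlinked node by appending it to its limbo bag; when the limbo bag exceeds a predetermined size threshold, the thread (a reclaimer) first sends a neutralizing signal to every participating thread, then scans the reservations of all threads, then frees every node in its limbo bag that is not reserved. Assumption: if a thread $T_i$ sends a signal to $T_j$, then by the time $T_i$ finishes sending it, $T_j$ has received it and will execute the signal handler before taking any further step of its program. *)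

theory Defs
  imports Main
begin

text \<open>
  Ent is the fixed set of entry-point nodes (never unlinked), r is the number of
  reservation slots per thread, thr the limbo-bag size threshold.
\<close>

text \<open>Program position of a thread (outside of reclamation):
  Idle: outside an operation / in a preamble (no access to shared nodes);
  Chk: checkpoint (sigsetjmp) set, about to start a read phase (clear reservations);
  Clr: reservations cleared, about to store true into restartable;
  Rd: in a read phase (restartable = true);
  Wr: in a write phase (restartable = false).\<close>
datatype mode = Idle | Chk | Clr | Rd | Wr

text \<open>Progress of a reclamation pass of a reclaimer: Sig S = the threads in S still have
  to be signalled; Scan S R = the reservations of the threads in S still have to be
  scanned, R is the set of reserved nodes seen so far.\<close>
datatype ('t, 'n) recl = Sig "'t set" | Scan "'t set" "'n set"

record ('t, 'n) nbr_state =
  mode  :: "'t \<Rightarrow> mode"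
  rst   :: "'t \<Rightarrow> bool"
  refs  :: "'t \<Rightarrow> 'n set"        \<comment> \<open>private references obtained in the current read phase\<close>
  resv  :: "'t \<Rightarrow> 'n set"
  snap  :: "'t \<Rightarrow> 'n set"        \<comment> \<open>nodes already unlinked when the current read phase began\<close>
  bag   :: "'t \<Rightarrow> 'n set"
  recl  :: "'t \<Rightarrow> ('t, 'n) recl option"
  unl   :: "'n set"
  ret   :: "'n set"
  freed :: "'n set"

datatype ('t, 'n) act =
    ABegin 't              \<comment> \<open>set checkpoint immediately before a read phase\<close>
  | AClear 't
  | AStartRead 't
  | ARead 't 'n 'n         \<comment> \<open>read node m (access), obtaining pointer n\<close>
  | AReserve 't 'n
  | AEnterWrite 't
  | AWrite 't 'n
  | AUnlink 't 'n
  | ARetire 't 'n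
  | AEnd 't
  | ASignal 't 't          \<comment> \<open>reclaimer sends neutralizing signal; handler runs at target\<close>
  | AScan 't 't
  | AFree 't

fun accesses :: "('t, 'n) act \<Rightarrow> 'n set" where
  "accesses (ARead t m n) = {m}"
| "accesses (AWrite t n) = {n}"
| "accesses _ = {}"

definition handler :: "'t \<Rightarrow> ('t, 'n) nbr_state \<Rightarrow> ('t, 'n) nbr_state" where
  "handler u s = (if rst s u
     then s\<lparr>mode := (mode s)(u := Chk), refs := (refs s)(u := {})\<rparr>
     else s)"

definition nbr_init :: "('t, 'n) nbr_state \<Rightarrow> bool" where
  "nbr_init s \<longleftrightarrow> (\<forall>t. mode s t = Idle \<and> \<not> rst s t \<and> refs s t = {} \<and> resv s t = {}
      \<and> bag s t = {} \<and> recl s t = None) \<and> unl s = {} \<and> ret s = {} \<and> freed s = {}"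

inductive nbr_step ::
  "'n set \<Rightarrow> nat \<Rightarrow> nat \<Rightarrow> ('t, 'n) nbr_state \<Rightarrow> ('t, 'n) act \<Rightarrow> ('t, 'n) nbr_state \<Rightarrow> bool"
  for Ent :: "'n set" and r :: nat and thr :: nat
where
  nbr_begin: "\<lbrakk>recl s t = None; mode s t \<in> {Idle, Wr}\<rbrakk> \<Longrightarrow>
     nbr_step Ent r thr s (ABegin t) (s\<lparr>mode := (mode s)(t := Chk)\<rparr>)"
| clear: "\<lbrakk>recl s t = None; mode s t = Chk\<rbrakk> \<Longrightarrow>
     nbr_step Ent r thr s (AClear t)
       (s\<lparr>mode := (mode s)(t := Clr), resv := (resv s)(t := {})\<rparr>)"
| start_read: "\<lbrakk>recl s t = None; mode s t = Clr\<rbrakk> \<Longrightarrow>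
     nbr_step Ent r thr s (AStartRead t)
       (s\<lparr>mode := (mode s)(t := Rd), rst := (rst s)(t := True),
          refs := (refs s)(t := {}), snap := (snap s)(t := unl s)\<rparr>)"
| read: "\<lbrakk>recl s t = None; mode s t = Rd; m \<in> Ent \<union> refs s t; n \<notin> snap s t\<rbrakk> \<Longrightarrow>
     nbr_step Ent r thr s (ARead t m n) (s\<lparr>refs := (refs s)(t := insert n (refs s t))\<rparr>)"
| reserve: "\<lbrakk>recl s t = None; mode s t = Rd; n \<in> Ent \<union> refs s t; card (resv s t) < r\<rbrakk> \<Longrightarrow>
     nbr_step Ent r thr s (AReserve t n) (s\<lparr>resv := (resv s)(t := insert n (resv s t))\<rparr>)"
| enter_write: "\<lbrakk>recl s t = None; mode s t = Rd\<rbrakk> \<Longrightarrow>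
     nbr_step Ent r thr s (AEnterWrite t)
       (s\<lparr>mode := (mode s)(t := Wr), rst := (rst s)(t := False), refs := (refs s)(t := {})\<rparr>)"
| nbr_write: "\<lbrakk>recl s t = None; mode s t = Wr; n \<in> resv s t\<rbrakk> \<Longrightarrow>
     nbr_step Ent r thr s (AWrite t n) s"
| unlink: "\<lbrakk>recl s t = None; mode s t = Wr; n \<notin> Ent; n \<notin> unl s\<rbrakk> \<Longrightarrow>
     nbr_step Ent r thr s (AUnlink t n) (s\<lparr>unl := insert n (unl s)\<rparr>)"
| retire: "\<lbrakk>recl s t = None; mode s t = Wr; n \<in> unl s; n \<notin> ret s\<rbrakk> \<Longrightarrow>
     nbr_step Ent r thr s (ARetire t n)
       (s\<lparr>bag := (bag s)(t := insert n (bag s t)), ret := insert n (ret s),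
          recl := (recl s)(t := (if card (insert n (bag s t)) > thr then Some (Sig UNIV) else None))\<rparr>)"
| nbr_finish: "\<lbrakk>recl s t = None; mode s t = Wr\<rbrakk> \<Longrightarrow>
     nbr_step Ent r thr s (AEnd t) (s\<lparr>mode := (mode s)(t := Idle)\<rparr>)"
| signal: "\<lbrakk>recl s t = Some (Sig S); u \<in> S\<rbrakk> \<Longrightarrow>
     nbr_step Ent r thr s (ASignal t u)
       (let s' = handler u s in
          s'\<lparr>recl := (recl s')(t := Some (if S - {u} = {} then Scan UNIV {} else Sig (S - {u})))\<rparr>)"
| scan: "\<lbrakk>recl s t = Some (Scan S R); u \<in> S\<rbrakk> \<Longrightarrow>
     nbr_step Ent r thr s (AScan t u)
       (s\<lparr>recl := (recl s)(t := Some (Scan (S - {u}) (R \<union> resv s u)))\<rparr>)"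
| nbr_free: "recl s t = Some (Scan {} R) \<Longrightarrow>
     nbr_step Ent r thr s (AFree t)
       (s\<lparr>freed := freed s \<union> (bag s t - R), bag := (bag s)(t := bag s t \<inter> R),
          recl := (recl s)(t := None)\<rparr>)"

end

theory Submission
  imports Defs
begin

text \<open>
  Fix a node n. While n lies in a limbo bag, the reclaimer's pass keeps the following
  invariant: every thread that has already been signalled holds no private reference to n,
  and if it is in a read phase, that phase started after n was unlinked, so it can never
  rediscover n (reads only produce nodes that were not yet unlinked when the phase began).
  Once every thread has been signalled, the scan records every reservation of n. Hence, if n
  is freed, it is at that moment unlinked, unreserved and unreachable for all threads; this
  is preserved by every later step, while a thread only ever accesses entry points, nodes it
  holds a private reference to, and nodes it has reserved.
\<close>

lemma run_invariant:
  assumes run: "\<forall>i<k. step (\<sigma> i) (\<alpha> i) (\<sigma> (Suc i))"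
    and "Q (\<sigma> l)"
    and preserved: "\<And>s a s'. Q s \<Longrightarrow> step s a s' \<Longrightarrow> Q s'"
    and "l \<le> m" "m \<le> k"
  shows "Q (\<sigma> m)"
  using \<open>l \<le> m\<close> \<open>m \<le> k\<close>
proof (induction m rule: dec_induct)
  case base
  show ?case by fact
next
  case (step m)
  then have "step (\<sigma> m) (\<alpha> m) (\<sigma> (Suc m))" using run by simp
  with step show ?case using preserved by simp
qed

fun actor :: "('t, 'n) act \<Rightarrow> 't" where
  "actor (ABegin t) = t"
| "actor (AClear t) = t"
| "actor (AStartRead t) = t"
| "actor (ARead t m n) = t"
| "actor (AReserve t n) = t"
| "actor (AEnterWrite t) = t"
| "actor (AWrite t n) = t"
| "actor (AUnlink t n) = t"
| "actor (ARetire t n) = t"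
| "actor (AEnd t) = t"
| "actor (ASignal t u) = t"
| "actor (AScan t u) = t"
| "actor (AFree t) = t"

lemma handler_simps [simp]:
  "recl (handler u s) = recl s" "bag (handler u s) = bag s"
  "resv (handler u s) = resv s" "unl (handler u s) = unl s"
  by (simp_all add: handler_def)

lemma step_bag_recl_other:
  assumes "nbr_step Ent r thr s a s'" "t \<noteq> actor a"
  shows "bag s' t = bag s t" "recl s' t = recl s t"
  using assms by (cases rule: nbr_step.cases; simp add: Let_def)+

lemma step_unl_mono:
  assumes "nbr_step Ent r thr s a s'"
  shows "unl s \<subseteq> unl s'"
  using assms by (cases rule: nbr_step.cases) (auto simp: Let_def)

definition wf_state :: "'n set \<Rightarrow> ('t, 'n) nbr_state \<Rightarrow> bool" where
  "wf_state Ent s \<longleftrightarrow> (\<forall>u. mode s u = Rd \<longrightarrow> rst s u) \<and> (\<forall>u. refs s u \<noteq> {} \<longrightarrow> mode s u = Rd)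
     \<and> (\<forall>t. bag s t \<subseteq> unl s) \<and> unl s \<inter> Ent = {}"

lemma wf_state_init: "nbr_init s \<Longrightarrow> wf_state Ent s"
  by (simp add: nbr_init_def wf_state_def)

lemma wf_state_step:
  assumes "wf_state Ent s" "nbr_step Ent r thr s a s'"
  shows "wf_state Ent s'"
  using assms(2,1)
  by (cases rule: nbr_step.cases) (auto simp: wf_state_def handler_def Let_def)

lemma wf_state_bag_unlinked:
  assumes "wf_state Ent s" "n \<in> bag s t"
  shows "n \<in> unl s" "n \<notin> Ent"
  using assms unfolding wf_state_def by blast+

definition cannot_reach :: "'n \<Rightarrow> ('t, 'n) nbr_state \<Rightarrow> 't \<Rightarrow> bool" where
  "cannot_reach n s u \<longleftrightarrow> n \<notin> refs s u \<and> (mode s u = Rd \<longrightarrow> n \<in> snap s u)"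

lemma cannot_reach_step:
  assumes "cannot_reach n s u" "n \<in> unl s" "nbr_step Ent r thr s a s'"
  shows "cannot_reach n s' u"
  using assms(3,1,2)
  by (cases rule: nbr_step.cases) (auto simp: cannot_reach_def handler_def Let_def)

text \<open>If restartable is false, u is outside a read phase and so, by wf_state, holds no
  private references; otherwise the handler discards them and restarts the read phase.\<close>
lemma cannot_reach_signalled:
  assumes "wf_state Ent s"
  shows "cannot_reach n (handler u s) u"
  using assms by (auto simp: cannot_reach_def handler_def wf_state_def)

lemma not_reserved_step:
  assumes "nbr_step Ent r thr s a s'" "n \<notin> resv s u" "cannot_reach n s u" "n \<notin> Ent"
  shows "n \<notin> resv s' u"
  using assms
  by (cases rule: nbr_step.cases) (auto simp: cannot_reach_def Let_def split: if_splits)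

fun recl_inv :: "'n \<Rightarrow> ('t, 'n) nbr_state \<Rightarrow> ('t, 'n) recl option \<Rightarrow> bool" where
  "recl_inv n s None = True"
| "recl_inv n s (Some (Sig S)) = (\<forall>u. u \<notin> S \<longrightarrow> cannot_reach n s u)"
| "recl_inv n s (Some (Scan S R)) =
     (\<forall>u. cannot_reach n s u \<and> (u \<notin> S \<longrightarrow> n \<in> resv s u \<longrightarrow> n \<in> R))"

lemma recl_inv_step:
  assumes "recl_inv n s \<rho>" "n \<in> unl s" "n \<notin> Ent" "nbr_step Ent r thr s a s'"
  shows "recl_inv n s' \<rho>"
proof (cases \<rho>)
  case (Some c)
  then show ?thesis
  proof (cases c)
    case (Sig S)
    then show ?thesis using assms(1) Some cannot_reach_step[OF _ assms(2,4)] by simp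
  next
    case (Scan S R)
    with assms(1) Some
    have inv: "\<forall>v. cannot_reach n s v \<and> (v \<notin> S \<longrightarrow> n \<in> resv s v \<longrightarrow> n \<in> R)"
      by simp
    have "cannot_reach n s' v \<and> (v \<notin> S \<longrightarrow> n \<in> resv s' v \<longrightarrow> n \<in> R)" for v
      using inv cannot_reach_step[OF _ assms(2,4)] not_reserved_step[OF assms(4) _ _ assms(3)]
      by blast
    with Some Scan show ?thesis by simp
  qed
qed simp

inductive_cases signal_stepE: "nbr_step Ent r thr s (ASignal t u) s'"
inductive_cases scan_stepE: "nbr_step Ent r thr s (AScan t u) s'"

lemma recl_inv_signal_step:
  assumes "nbr_step Ent r thr s (ASignal t u) s'" "wf_state Ent s" "n \<in> bag s t"
    and "recl_inv n s (recl s t)"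
  shows "recl_inv n s' (recl s' t)"
proof -
  obtain S where s': "s' = (handler u s)
      \<lparr>recl := (recl s)(t := Some (if S \<subseteq> {u} then Scan UNIV {} else Sig (S - {u})))\<rparr>"
    and S: "recl s t = Some (Sig S)" "u \<in> S"
    using assms(1) by (rule signal_stepE)
  have "n \<in> unl s" using wf_state_bag_unlinked(1)[OF assms(2,3)] .
  then have "cannot_reach n s' v" if "v \<notin> S" for v
    using assms(4) S that cannot_reach_step[OF _ _ assms(1)] by simp
  moreover have "cannot_reach n s' u"
    using cannot_reach_signalled[OF assms(2)] s' by (simp add: cannot_reach_def)
  ultimately have "cannot_reach n s' v" if "v \<notin> S - {u}" for v
    using that by blast
  moreover have "recl s' t = Some (if S \<subseteq> {u} then Scan UNIV {} else Sig (S - {u}))"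
    using s' by simp
  ultimately show ?thesis by auto
qed

lemma recl_inv_scan_step:
  assumes "nbr_step Ent r thr s (AScan t u) s'" "recl_inv n s (recl s t)"
  shows "recl_inv n s' (recl s' t)"
proof -
  obtain S R where s': "s' = s\<lparr>recl := (recl s)(t := Some (Scan (S - {u}) (R \<union> resv s u)))\<rparr>"
    and "recl s t = Some (Scan S R)"
    using assms(1) by (rule scan_stepE)
  with assms(2) have "\<forall>v. cannot_reach n s v \<and> (v \<notin> S \<longrightarrow> n \<in> resv s v \<longrightarrow> n \<in> R)"
    by simp
  then show ?thesis using s' by (auto simp: cannot_reach_def)
qed

lemma recl_inv_actor_step:
  assumes "nbr_step Ent r thr s a s'" "wf_state Ent s" "n \<in> bag s (actor a)"
    and "recl_inv n s (recl s (actor a))"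
  shows "recl_inv n s' (recl s' (actor a))"
  using assms(1)
proof (cases rule: nbr_step.cases)
  case (signal t S u)
  then have "nbr_step Ent r thr s (ASignal t u) s'" using assms(1) by simp
  from recl_inv_signal_step[OF this] show ?thesis using assms(2-4) signal(1) by simp
next
  case (scan t S R u)
  then have "nbr_step Ent r thr s (AScan t u) s'" using assms(1) by simp
  from recl_inv_scan_step[OF this] show ?thesis using assms(4) scan(1) by simp
qed auto

definition nbr_inv :: "'n set \<Rightarrow> 'n \<Rightarrow> ('t, 'n) nbr_state \<Rightarrow> bool" where
  "nbr_inv Ent n s \<longleftrightarrow> wf_state Ent s \<and> (\<forall>t. n \<in> bag s t \<longrightarrow> recl_inv n s (recl s t))"

lemma nbr_inv_init: "nbr_init s \<Longrightarrow> nbr_inv Ent n s"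
  by (simp add: nbr_inv_def nbr_init_def wf_state_init)

lemma nbr_inv_step:
  assumes "nbr_inv Ent n s" "nbr_step Ent r thr s a s'"
  shows "nbr_inv Ent n s'"
  unfolding nbr_inv_def
proof (intro conjI allI impI)
  have wf: "wf_state Ent s" using assms(1) by (simp add: nbr_inv_def)
  then show "wf_state Ent s'" using wf_state_step assms(2) by blast
  fix t
  assume "n \<in> bag s' t"
  show "recl_inv n s' (recl s' t)"
  proof (cases "n \<in> bag s t")
    case False
    with \<open>n \<in> bag s' t\<close> have "t = actor a"
      using step_bag_recl_other(1)[OF assms(2)] by metis
    show ?thesis
      using assms(2) False \<open>n \<in> bag s' t\<close> \<open>t = actor a\<close>
      by (cases rule: nbr_step.cases) (auto simp: Let_def)
  next
    case True
    then have inv: "recl_inv n s (recl s t)" using assms(1) by (simp add: nbr_inv_def)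
    show ?thesis
    proof (cases "t = actor a")
      case True
      then show ?thesis
        using recl_inv_actor_step[OF assms(2) wf] \<open>n \<in> bag s t\<close> inv by simp
    next
      case False
      then have "recl s' t = recl s t" using step_bag_recl_other(2)[OF assms(2)] by simp
      with inv show ?thesis
        using recl_inv_step[OF inv wf_state_bag_unlinked[OF wf \<open>n \<in> bag s t\<close>] assms(2)] by simp
    qed
  qed
qed

definition dead_node :: "'n set \<Rightarrow> 'n \<Rightarrow> ('t, 'n) nbr_state \<Rightarrow> bool" where
  "dead_node Ent n s \<longleftrightarrow> n \<in> unl s \<and> n \<notin> Ent \<and> (\<forall>u. cannot_reach n s u \<and> n \<notin> resv s u)"

lemma freed_node_dead:
  assumes "nbr_inv Ent n s" "nbr_step Ent r thr s a s'" "n \<notin> freed s" "n \<in> freed s'"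
  shows "dead_node Ent n s'"
  using assms(2)
proof (cases rule: nbr_step.cases)
  case (nbr_free t R)
  then have bag: "n \<in> bag s t" and "n \<notin> R" using assms(3,4) by auto
  have "recl_inv n s (recl s t)" using assms(1) bag by (simp add: nbr_inv_def)
  with nbr_free(3) have "\<forall>u. cannot_reach n s u \<and> (n \<in> resv s u \<longrightarrow> n \<in> R)" by simp
  moreover have "wf_state Ent s" using assms(1) by (simp add: nbr_inv_def)
  ultimately show ?thesis
    using wf_state_bag_unlinked[OF _ bag] \<open>n \<notin> R\<close> nbr_free(2)
    by (auto simp: dead_node_def cannot_reach_def)
qed (use assms(3,4) in \<open>auto simp: Let_def handler_def\<close>)

lemma dead_node_step:
  assumes "dead_node Ent n s" "nbr_step Ent r thr s a s'"
  shows "dead_node Ent n s'"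
proof -
  have "n \<in> unl s" "n \<notin> Ent" "\<And>u. cannot_reach n s u" "\<And>u. n \<notin> resv s u"
    using assms(1) by (auto simp: dead_node_def)
  then show ?thesis
    using step_unl_mono[OF assms(2)] cannot_reach_step[OF _ _ assms(2)]
      not_reserved_step[OF assms(2)]
    unfolding dead_node_def by blast
qed

lemma dead_node_not_accessed:
  assumes "dead_node Ent n s" "nbr_step Ent r thr s a s'"
  shows "n \<notin> accesses a"
  using assms(2,1)
  by (cases rule: nbr_step.cases) (auto simp: dead_node_def cannot_reach_def)

theorem lemma6:
  fixes Ent :: "'n set" and r thr k :: nat
    and \<sigma> :: "nat \<Rightarrow> ('t::finite, 'n) nbr_state" and \<alpha> :: "nat \<Rightarrow> ('t, 'n) act"
  assumes init: "nbr_init (\<sigma> 0)"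
    and run: "\<forall>i<k. nbr_step Ent r thr (\<sigma> i) (\<alpha> i) (\<sigma> (Suc i))"
    and ij: "i < j" "j < k"
    and freed_at_i: "n \<notin> freed (\<sigma> i)" "n \<in> freed (\<sigma> (Suc i))"
  shows "n \<notin> accesses (\<alpha> j)"
proof -
  have step: "nbr_step Ent r thr (\<sigma> l) (\<alpha> l) (\<sigma> (Suc l))" if "l < k" for l
    using run that by blast
  have "nbr_inv Ent n (\<sigma> i)"
    by (rule run_invariant[where step = "nbr_step Ent r thr" and Q = "nbr_inv Ent n",
          OF run nbr_inv_init[OF init] nbr_inv_step]) (use ij in simp_all)
  then have "dead_node Ent n (\<sigma> (Suc i))"
    using freed_node_dead[OF _ step freed_at_i] ij by simp
  then have "dead_node Ent n (\<sigma> j)"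
    by (rule run_invariant[where step = "nbr_step Ent r thr" and Q = "dead_node Ent n",
          OF run _ dead_node_step]) (use ij in simp_all)
  then show ?thesis
    using dead_node_not_accessed step \<open>j < k\<close> by metis
qed

end
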